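(* Let $(\mathbf{x}^1,y_l^1,y_r^1),\dots,(\mathbf{x}^T,y_l^T,y_r^T)$ be a sequence of examples with $\mathbf{x}^t\in\mathbb{R}^d$ and integers $1\le y_l^t\le y_r^t\le K$, and run the PA algorithm on it starting from $\mathbf{w}^1=\mathbf{0}$, $\boldsymbol\theta^1=\mathbf{0}$. Let $c=\min_{t\in[T]}(y_r^t-y_l^t)$, $R^2=\max_{t\in[T]}\Vert\mathbf{x}^t\Vert^2$, $D=1+R^2(K-c-1)$, and let $\mathbf{v}=(\mathbf{u},\mathbf{b})$ with $\mathbf{u}\in\mathbb{R}^d$, $\mathbf{b}\in\mathbb{R}^{K-1}$ be the parameters of an arbitrary predictor, $\Vert\mathbf{v}\Vert^2=\Vert\mathbf{u}\Vert^2+\Vert\mathbf{b}\Vert^2$. Then $$\sum_{t=1}^T\sum_{i=1}^{K-1}(l_i^t)^2\le D^2\left(\Vert\mathbf{v}\Vert+4(K-c-1)\sqrt{\sum_{t=1}^T\sum_{i=1}^{K-1}(l_i^{t*})^2}\right)^2 .$$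
   Context: PA algorithm: at trial $t$, with current $(\mathbf{w}^t,\boldsymbol\theta^t)\in\mathbb{R}^d\times\mathbb{R}^{K-1}$, the new parameters $(\mathbf{w}^{t+1},\boldsymbol\theta^{t+1})$ are the unique minimizer of $\tfrac12\Vert\mathbf{w}-\mathbf{w}^t\Vert^2+\tfrac12\Vert\boldsymbol\theta-\boldsymbol\theta^t\Vert^2$ subject to $\mathbf{w}\cdot\mathbf{x}^t-\theta_i\ge1$ for $i=1,\dots,y_l^t-1$ and $\mathbf{w}\cdot\mathbf{x}^t-\theta_i\le-1$ for $i=y_r^t,\dots,K-1$. Losses of the algorithm at trial $t$: $l_i^t=\max(0,1+\theta_i^t-\mathbf{w}^t\cdot\mathbf{x}^t)$ for $1\le i\le y_l^t-1$, $l_i^t=\max(0,1+\mathbf{w}^t\cdot\mathbf{x}^t-\theta_i^t)$ for $y_r^t\le i\le K-1$, and $l_i^t=0$ for $y_l^t\le i\le y_r^t-1$. Losses of the fixed predictor $(\mathbf{u},\mathbf{b})$: $l_i^{t*}=\max(0,1-\mathbf{u}\cdot\mathbf{x}^t+b_i)$ for $1\le i\le y_l^t-1$, $l_i^{t*}=\max(0,1+\mathbf{u}\cdot\mathbf{x}^t-b_i)$ for $y_r^t\le i\le K-1$, and $0$ otherwise. *)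

theory Defs
  imports "HOL-Analysis.Analysis"
begin

text \<open>Weight vectors live in an
arbitrary Euclidean space 'a (= R^d); threshold vectors in R^(K-1) are
represented as functions nat => real whose relevant coordinates are 1..K-1.\<close>

definition pa_feasible ::
  "nat \<Rightarrow> 'a::euclidean_space \<Rightarrow> nat \<Rightarrow> nat \<Rightarrow> 'a \<Rightarrow> (nat \<Rightarrow> real) \<Rightarrow> bool" where
  "pa_feasible K x yl yr w \<theta> \<longleftrightarrow>
     (\<forall>i\<in>{1..<yl}. w \<bullet> x - \<theta> i \<ge> 1) \<and> (\<forall>i\<in>{yr..K-1}. w \<bullet> x - \<theta> i \<le> -1)"

definition pa_objective ::
  "nat \<Rightarrow> 'a::euclidean_space \<Rightarrow> (nat \<Rightarrow> real) \<Rightarrow> 'a \<Rightarrow> (nat \<Rightarrow> real) \<Rightarrow> real" where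
  "pa_objective K w0 \<theta>0 w \<theta> =
     (1/2) * (norm (w - w0))\<^sup>2 + (1/2) * (\<Sum>i=1..K-1. (\<theta> i - \<theta>0 i)\<^sup>2)"

definition is_PA_update ::
  "nat \<Rightarrow> 'a::euclidean_space \<Rightarrow> nat \<Rightarrow> nat \<Rightarrow> 'a \<Rightarrow> (nat \<Rightarrow> real)
     \<Rightarrow> 'a \<Rightarrow> (nat \<Rightarrow> real) \<Rightarrow> bool" where
  "is_PA_update K x yl yr w \<theta> w' \<theta>' \<longleftrightarrow>
     (\<forall>i. i \<notin> {1..K-1} \<longrightarrow> \<theta>' i = 0) \<and>
     pa_feasible K x yl yr w' \<theta>' \<and>
     (\<forall>w2 \<theta>2. pa_feasible K x yl yr w2 \<theta>2 \<longrightarrow>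
        pa_objective K w \<theta> w' \<theta>' \<le> pa_objective K w \<theta> w2 \<theta>2)"

definition ord_loss ::
  "nat \<Rightarrow> 'a::euclidean_space \<Rightarrow> nat \<Rightarrow> nat \<Rightarrow> 'a \<Rightarrow> (nat \<Rightarrow> real) \<Rightarrow> nat \<Rightarrow> real" where
  "ord_loss K x yl yr w \<theta> i =
     (if 1 \<le> i \<and> i \<le> yl - 1 then max 0 (1 + \<theta> i - w \<bullet> x)
      else if yr \<le> i \<and> i \<le> K - 1 then max 0 (1 + w \<bullet> x - \<theta> i)
      else 0)"

end

theory Submission
  imports Defs
begin

(* The PA update is the Euclidean projection of v = (w, theta) onto the convex polyhedron of
   parameters satisfying the constraints of the current example. Moving each constrained threshold
   of the comparator (u, b) outward by its loss makes the comparator feasible, so the projection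
   inequality gives d^2 - 2 d s <= |v - (u,b)|^2 - |v' - (u,b)|^2 for the step length d = |v' - v|
   and the comparator's loss norm s. Telescoping and Cauchy-Schwarz over the trials bound the
   l2-norm of the step lengths by |(u,b)| + 2 S, where S is the l2-norm of all comparator losses.
   Conversely, each loss l_i of the algorithm is at most |theta'_i - theta_i| + R |w' - w|, and only
   K - 1 - (y_r - y_l) <= K - c - 1 of them can be nonzero, so the squared losses of a trial sum to
   at most D d^2. *)

definition param_inner ::
  "nat \<Rightarrow> 'a::real_inner \<Rightarrow> (nat \<Rightarrow> real) \<Rightarrow> 'a \<Rightarrow> (nat \<Rightarrow> real) \<Rightarrow> real" where
  "param_inner K w \<theta> w' \<theta>' = w \<bullet> w' + (\<Sum>i=1..K-1. \<theta> i * \<theta>' i)"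

definition param_norm :: "nat \<Rightarrow> 'a::real_inner \<Rightarrow> (nat \<Rightarrow> real) \<Rightarrow> real" where
  "param_norm K w \<theta> = sqrt (param_inner K w \<theta> w \<theta>)"

lemma param_inner_self: "param_inner K w \<theta> w \<theta> = (norm w)\<^sup>2 + (\<Sum>i=1..K-1. (\<theta> i)\<^sup>2)"
  by (simp add: param_inner_def dot_square_norm power2_eq_square)

lemma param_norm_eq: "param_norm K w \<theta> = sqrt ((norm w)\<^sup>2 + (\<Sum>i=1..K-1. (\<theta> i)\<^sup>2))"
  by (simp add: param_norm_def param_inner_self)

lemma param_norm_nonneg: "0 \<le> param_norm K w \<theta>"
  by (simp add: param_norm_eq sum_nonneg)

lemma power2_param_norm: "(param_norm K w \<theta>)\<^sup>2 = param_inner K w \<theta> w \<theta>"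
  by (simp add: param_norm_eq param_inner_self sum_nonneg)

lemma sum_mult_le_sqrt_sum_squares:
  fixes a b c d :: real
  shows "a * b + c * d \<le> sqrt (a\<^sup>2 + c\<^sup>2) * sqrt (b\<^sup>2 + d\<^sup>2)"
proof -
  have "(a * b + c * d)\<^sup>2 \<le> (a\<^sup>2 + c\<^sup>2) * (b\<^sup>2 + d\<^sup>2)"
    using zero_le_power2[of "a * d - b * c"] by (simp add: power2_eq_square algebra_simps)
  then show ?thesis
    by (metis real_le_rsqrt real_sqrt_mult)
qed

lemma param_inner_le_norm_mult: "param_inner K w \<theta> w' \<theta>' \<le> param_norm K w \<theta> * param_norm K w' \<theta>'"
proof -
  have "(\<Sum>i=1..K-1. \<theta> i * \<theta>' i) \<le> (\<Sum>i=1..K-1. \<bar>\<theta> i\<bar> * \<bar>\<theta>' i\<bar>)"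
    by (intro sum_mono) (metis abs_ge_self abs_mult)
  also have "\<dots> \<le> L2_set \<theta> {1..K-1} * L2_set \<theta>' {1..K-1}"
    by (rule L2_set_mult_ineq)
  finally have "param_inner K w \<theta> w' \<theta>' \<le> norm w * norm w' + L2_set \<theta> {1..K-1} * L2_set \<theta>' {1..K-1}"
    unfolding param_inner_def using norm_cauchy_schwarz[of w w'] by linarith
  also have "\<dots> \<le> param_norm K w \<theta> * param_norm K w' \<theta>'"
    using sum_mult_le_sqrt_sum_squares[of "norm w" "norm w'" "L2_set \<theta> {1..K-1}" "L2_set \<theta>' {1..K-1}"]
    by (simp add: param_norm_eq L2_set_def sum_nonneg)
  finally show ?thesis .
qed

lemma param_inner_self_add_scaled:
  "param_inner K (v + c *\<^sub>R v') (\<lambda>i. \<beta> i + c * \<beta>' i) (v + c *\<^sub>R v') (\<lambda>i. \<beta> i + c * \<beta>' i)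
   = param_inner K v \<beta> v \<beta> + 2 * c * param_inner K v \<beta> v' \<beta>' + c\<^sup>2 * param_inner K v' \<beta>' v' \<beta>'"
  by (simp add: param_inner_def inner_add_left inner_add_right inner_commute sum.distrib
      sum_distrib_left power2_eq_square algebra_simps)

lemma param_norm_three_point:
  "(param_norm K (w - u) (\<theta> - b))\<^sup>2 = (param_norm K (w' - u) (\<theta>' - b))\<^sup>2
     + (param_norm K (w' - w) (\<theta>' - \<theta>))\<^sup>2 + 2 * param_inner K (w' - w) (\<theta>' - \<theta>) (u - w') (b - \<theta>')"
  by (simp add: power2_param_norm param_inner_def inner_diff_left inner_diff_right inner_commute
      sum.distrib sum_subtractf sum_distrib_left algebra_simps)

lemma pa_objective_eq: "pa_objective K w0 \<theta>0 w \<theta> = (param_norm K (w - w0) (\<theta> - \<theta>0))\<^sup>2 / 2"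
  by (simp add: pa_objective_def power2_param_norm param_inner_self)

lemma nonneg_if_quadratic_nonneg_near_0:
  fixes G H :: real
  assumes "\<And>c. 0 < c \<Longrightarrow> c \<le> 1 \<Longrightarrow> 0 \<le> c * G + c\<^sup>2 * H"
  shows "0 \<le> G"
proof (rule ccontr)
  assume "\<not> 0 \<le> G"
  define c where "c = min 1 (- G / (2 * (\<bar>H\<bar> + 1)))"
  have c: "0 < c" "c \<le> 1" "c * \<bar>H\<bar> \<le> - G / 2"
    using \<open>\<not> 0 \<le> G\<close> by (auto simp: c_def min_def field_simps)
  have "0 \<le> c * (G + c * H)"
    using assms[OF c(1,2)] by (simp add: power2_eq_square algebra_simps)
  then have "0 \<le> G + c * H"
    using c(1) by (simp add: zero_le_mult_iff)
  moreover have "c * H \<le> c * \<bar>H\<bar>"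
    using c(1) by (simp add: mult_left_mono)
  ultimately show False
    using c(3) \<open>\<not> 0 \<le> G\<close> by linarith
qed

lemma pa_feasible_segment:
  assumes "pa_feasible K x yl yr w \<theta>" "pa_feasible K x yl yr w' \<theta>'" "0 \<le> c" "c \<le> 1"
  shows "pa_feasible K x yl yr (w + c *\<^sub>R (w' - w)) (\<lambda>i. \<theta> i + c * (\<theta>' i - \<theta> i))"
proof -
  have margin: "(w + c *\<^sub>R (w' - w)) \<bullet> x - (\<theta> i + c * (\<theta>' i - \<theta> i))
      = (1 - c) * (w \<bullet> x - \<theta> i) + c * (w' \<bullet> x - \<theta>' i)" for i
    by (simp add: inner_add_left inner_diff_left algebra_simps)
  have "(1 - c) * 1 + c * 1 \<le> (1 - c) * (w \<bullet> x - \<theta> i) + c * (w' \<bullet> x - \<theta>' i)" if "i \<in> {1..<yl}" for i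
    using assms that unfolding pa_feasible_def by (intro add_mono mult_left_mono) auto
  moreover have "(1 - c) * (w \<bullet> x - \<theta> i) + c * (w' \<bullet> x - \<theta>' i) \<le> (1 - c) * -1 + c * -1"
    if "i \<in> {yr..K-1}" for i
    using assms that unfolding pa_feasible_def by (intro add_mono mult_left_mono) auto
  ultimately show ?thesis
    unfolding pa_feasible_def margin by auto
qed

(* The PA update minimises the distance to (w, theta) over a convex set containing the segment
   from (w', theta') to (u, b); this is the first-order condition at (w', theta'). *)
lemma pa_update_projection_ineq:
  assumes upd: "is_PA_update K x yl yr w \<theta> w' \<theta>'" and feas: "pa_feasible K x yl yr u b"
  shows "0 \<le> param_inner K (w' - w) (\<theta>' - \<theta>) (u - w') (b - \<theta>')"
proof (rule nonneg_if_quadratic_nonneg_near_0)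
  fix c :: real assume c: "0 < c" "c \<le> 1"
  let ?w = "w' + c *\<^sub>R (u - w')" and ?\<theta> = "\<lambda>i. \<theta>' i + c * (b i - \<theta>' i)"
  have segment: "?w - w = (w' - w) + c *\<^sub>R (u - w')"
    "?\<theta> - \<theta> = (\<lambda>i. (\<theta>' - \<theta>) i + c * (b - \<theta>') i)"
    by (auto simp: fun_eq_iff algebra_simps)
  have "pa_feasible K x yl yr w' \<theta>'"
    using upd by (simp add: is_PA_update_def)
  then have "pa_feasible K x yl yr ?w ?\<theta>"
    using feas c by (intro pa_feasible_segment) auto
  then have "pa_objective K w \<theta> w' \<theta>' \<le> pa_objective K w \<theta> ?w ?\<theta>"
    using upd by (simp add: is_PA_update_def)
  also have "\<dots> = pa_objective K w \<theta> w' \<theta>'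
      + c * param_inner K (w' - w) (\<theta>' - \<theta>) (u - w') (b - \<theta>')
      + c\<^sup>2 * (param_inner K (u - w') (b - \<theta>') (u - w') (b - \<theta>') / 2)"
    unfolding pa_objective_eq power2_param_norm segment
    by (simp only: param_inner_self_add_scaled) (simp add: fun_diff_def)
  finally show "0 \<le> c * param_inner K (w' - w) (\<theta>' - \<theta>) (u - w') (b - \<theta>')
      + c\<^sup>2 * (param_inner K (u - w') (b - \<theta>') (u - w') (b - \<theta>') / 2)"
    by simp
qed

lemma ord_loss_nonneg: "0 \<le> ord_loss K x yl yr w \<theta> i"
  by (simp add: ord_loss_def)

definition shifted_thresholds ::
  "nat \<Rightarrow> 'a::euclidean_space \<Rightarrow> nat \<Rightarrow> nat \<Rightarrow> 'a \<Rightarrow> (nat \<Rightarrow> real) \<Rightarrow> nat \<Rightarrow> real" where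
  "shifted_thresholds K x yl yr u b i =
     (if i < yl then b i - ord_loss K x yl yr u b i else b i + ord_loss K x yl yr u b i)"

lemma pa_feasible_shifted_thresholds:
  assumes "yl \<le> yr"
  shows "pa_feasible K x yl yr u (shifted_thresholds K x yl yr u b)"
  using assms unfolding pa_feasible_def shifted_thresholds_def ord_loss_def by auto

lemma param_norm_shifted_thresholds:
  "param_norm K 0 (shifted_thresholds K x yl yr u b - b) = L2_set (ord_loss K x yl yr u b) {1..K-1}"
proof -
  have "((shifted_thresholds K x yl yr u b - b) i)\<^sup>2 = (ord_loss K x yl yr u b i)\<^sup>2" for i
    by (simp add: shifted_thresholds_def)
  then show ?thesis
    by (simp add: param_norm_eq L2_set_def)
qed

lemma pa_update_progress:
  fixes u :: "'a::euclidean_space" and b :: "nat \<Rightarrow> real"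
  assumes upd: "is_PA_update K x yl yr w \<theta> w' \<theta>'" and "yl \<le> yr"
  defines "d \<equiv> param_norm K (w' - w) (\<theta>' - \<theta>)"
    and "s \<equiv> L2_set (ord_loss K x yl yr u b) {1..K-1}"
  shows "d\<^sup>2 - 2 * d * s \<le> (param_norm K (w - u) (\<theta> - b))\<^sup>2 - (param_norm K (w' - u) (\<theta>' - b))\<^sup>2"
proof -
  define b' where "b' = shifted_thresholds K x yl yr u b"
  have "0 \<le> param_inner K (w' - w) (\<theta>' - \<theta>) (u - w') (b' - \<theta>')"
    using upd pa_feasible_shifted_thresholds[OF \<open>yl \<le> yr\<close>]
    unfolding b'_def by (rule pa_update_projection_ineq)
  moreover have "param_inner K (w' - w) (\<theta>' - \<theta>) 0 (b' - b) \<le> d * s"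
    using param_inner_le_norm_mult[of K "w' - w" "\<theta>' - \<theta>" 0 "b' - b"]
    by (simp add: d_def s_def b'_def param_norm_shifted_thresholds)
  moreover have "param_inner K (w' - w) (\<theta>' - \<theta>) (u - w') (b - \<theta>')
      = param_inner K (w' - w) (\<theta>' - \<theta>) (u - w') (b' - \<theta>') - param_inner K (w' - w) (\<theta>' - \<theta>) 0 (b' - b)"
  proof -
    have "(\<Sum>i=1..K-1. (\<theta>' i - \<theta> i) * (b i - \<theta>' i))
        = (\<Sum>i=1..K-1. (\<theta>' i - \<theta> i) * (b' i - \<theta>' i) - (\<theta>' i - \<theta> i) * (b' i - b i))"
      by (simp add: algebra_simps)
    then show ?thesis
      by (simp add: param_inner_def sum_subtractf)
  qed
  ultimately show ?thesis
    using param_norm_three_point[of K w u \<theta> b w' \<theta>'] unfolding d_def by linarith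
qed

lemma ord_loss_le_update:
  assumes "pa_feasible K x yl yr w' \<theta>'"
  shows "ord_loss K x yl yr w \<theta> i \<le> \<bar>\<theta>' i - \<theta> i\<bar> + norm x * norm (w' - w)"
proof -
  have CS: "\<bar>w' \<bullet> x - w \<bullet> x\<bar> \<le> norm x * norm (w' - w)"
    using Cauchy_Schwarz_ineq2[of "w' - w" x] by (simp add: inner_diff_left mult.commute)
  consider "1 \<le> i \<and> i < yl"
    | "\<not> (1 \<le> i \<and> i < yl)" "yr \<le> i \<and> i \<le> K - 1"
    | "\<not> (1 \<le> i \<and> i < yl)" "\<not> (yr \<le> i \<and> i \<le> K - 1)"
    by blast
  then show ?thesis
  proof cases
    case 1
    then have "1 \<le> w' \<bullet> x - \<theta>' i" and "ord_loss K x yl yr w \<theta> i = max 0 (1 + \<theta> i - w \<bullet> x)"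
      using assms by (auto simp: pa_feasible_def ord_loss_def)
    then show ?thesis
      using CS by linarith
  next
    case 2
    then have "w' \<bullet> x - \<theta>' i \<le> -1" and "ord_loss K x yl yr w \<theta> i = max 0 (1 + w \<bullet> x - \<theta> i)"
      using assms by (auto simp: pa_feasible_def ord_loss_def)
    then show ?thesis
      using CS by linarith
  next
    case 3
    then show ?thesis
      by (auto simp: ord_loss_def)
  qed
qed

lemma ord_loss_unconstrained: "yl \<le> 1 \<Longrightarrow> K \<le> yr \<Longrightarrow> 1 \<le> i \<Longrightarrow> ord_loss K x yl yr w \<theta> i = 0"
  by (auto simp: ord_loss_def)

lemma square_add_mult_le:
  fixes a r p N :: real
  assumes "0 < N"
  shows "(a + r * p)\<^sup>2 \<le> (1 + N * r\<^sup>2) * a\<^sup>2 + (r\<^sup>2 + 1 / N) * p\<^sup>2"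
proof -
  have "0 \<le> (N * r * a - p)\<^sup>2 / N"
    using assms by simp
  then have "2 * (a * r * p) \<le> N * r\<^sup>2 * a\<^sup>2 + p\<^sup>2 / N"
    using assms by (simp add: power2_eq_square field_simps)
  then show ?thesis
    using assms by (simp add: power2_eq_square field_simps)
qed

lemma ord_loss_square_le_update:
  assumes "pa_feasible K x yl yr w' \<theta>'" "0 < N"
  shows "(ord_loss K x yl yr w \<theta> i)\<^sup>2
    \<le> (1 + N * (norm x)\<^sup>2) * (\<theta>' i - \<theta> i)\<^sup>2 + ((norm x)\<^sup>2 + 1 / N) * (norm (w' - w))\<^sup>2"
proof -
  have "(ord_loss K x yl yr w \<theta> i)\<^sup>2 \<le> (\<bar>\<theta>' i - \<theta> i\<bar> + norm x * norm (w' - w))\<^sup>2"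
    using ord_loss_le_update[OF assms(1), of w \<theta> i] ord_loss_nonneg[of K x yl yr w \<theta> i]
    by (intro power_mono) auto
  also have "\<dots> \<le> (1 + N * (norm x)\<^sup>2) * (\<theta>' i - \<theta> i)\<^sup>2 + ((norm x)\<^sup>2 + 1 / N) * (norm (w' - w))\<^sup>2"
    using square_add_mult_le[OF assms(2), of "\<bar>\<theta>' i - \<theta> i\<bar>" "norm x" "norm (w' - w)"] by simp
  finally show ?thesis .
qed

lemma card_constrained_thresholds:
  assumes "1 \<le> yl" "yl \<le> yr" "yr \<le> K"
  shows "card ({1..<yl} \<union> {yr..K-1}) = K - 1 - (yr - yl)"
  using assms by (subst card_Un_disjoint) auto

lemma sum_ord_loss_le_update:
  assumes upd: "is_PA_update K x yl yr w \<theta> w' \<theta>'" and lab: "1 \<le> yl" "yl \<le> yr" "yr \<le> K"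
  defines "N \<equiv> real (K - 1 - (yr - yl))"
  shows "(\<Sum>i=1..K-1. (ord_loss K x yl yr w \<theta> i)\<^sup>2)
    \<le> (1 + N * (norm x)\<^sup>2) * (param_norm K (w' - w) (\<theta>' - \<theta>))\<^sup>2"
proof -
  define S where "S = {1..<yl} \<union> {yr..K-1}"
  define p where "p = norm (w' - w)"
  have S: "S \<subseteq> {1..K-1}" "real (card S) = N"
    using lab card_constrained_thresholds[OF lab] by (auto simp: S_def N_def)
  have feas: "pa_feasible K x yl yr w' \<theta>'"
    using upd by (simp add: is_PA_update_def)
  have "(\<Sum>i=1..K-1. (ord_loss K x yl yr w \<theta> i)\<^sup>2) = (\<Sum>i\<in>S. (ord_loss K x yl yr w \<theta> i)\<^sup>2)"
    using S(1) by (intro sum.mono_neutral_right) (auto simp: S_def ord_loss_def)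
  also have "\<dots> \<le> (\<Sum>i\<in>S. (1 + N * (norm x)\<^sup>2) * (\<theta>' i - \<theta> i)\<^sup>2 + ((norm x)\<^sup>2 + 1 / N) * p\<^sup>2)"
  proof (rule sum_mono)
    fix i assume "i \<in> S"
    then have "0 < N"
      using S by (auto simp: S_def card_gt_0_iff)
    then show "(ord_loss K x yl yr w \<theta> i)\<^sup>2
        \<le> (1 + N * (norm x)\<^sup>2) * (\<theta>' i - \<theta> i)\<^sup>2 + ((norm x)\<^sup>2 + 1 / N) * p\<^sup>2"
      unfolding p_def by (rule ord_loss_square_le_update[OF feas])
  qed
  also have "\<dots> = (1 + N * (norm x)\<^sup>2) * (\<Sum>i\<in>S. (\<theta>' i - \<theta> i)\<^sup>2) + N * ((norm x)\<^sup>2 + 1 / N) * p\<^sup>2"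
    by (simp add: sum.distrib sum_distrib_left S(2))
  also have "\<dots> \<le> (1 + N * (norm x)\<^sup>2) * (\<Sum>i=1..K-1. (\<theta>' i - \<theta> i)\<^sup>2) + (1 + N * (norm x)\<^sup>2) * p\<^sup>2"
  proof (intro add_mono mult_left_mono mult_right_mono)
    show "(\<Sum>i\<in>S. (\<theta>' i - \<theta> i)\<^sup>2) \<le> (\<Sum>i=1..K-1. (\<theta>' i - \<theta> i)\<^sup>2)"
      using S(1) by (intro sum_mono2) auto
    show "N * ((norm x)\<^sup>2 + 1 / N) \<le> 1 + N * (norm x)\<^sup>2"
      by (cases "N = 0") (simp_all add: distrib_left)
  qed (simp_all add: N_def)
  also have "\<dots> = (1 + N * (norm x)\<^sup>2) * (param_norm K (w' - w) (\<theta>' - \<theta>))\<^sup>2"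
    by (simp add: param_norm_eq p_def sum_nonneg distrib_left add.commute)
  finally show ?thesis .
qed

lemma sum_ord_loss_le_update_bound:
  assumes upd: "is_PA_update K x yl yr w \<theta> w' \<theta>'" and lab: "1 \<le> yl" "yl \<le> yr" "yr \<le> K"
    and "K - 1 - (yr - yl) \<le> N" "(norm x)\<^sup>2 \<le> R2" "0 \<le> R2"
  shows "(\<Sum>i=1..K-1. (ord_loss K x yl yr w \<theta> i)\<^sup>2)
    \<le> (1 + R2 * real N) * (param_norm K (w' - w) (\<theta>' - \<theta>))\<^sup>2"
proof -
  have "real (K - 1 - (yr - yl)) * (norm x)\<^sup>2 \<le> real N * R2"
    using assms by (intro mult_mono) auto
  then have "1 + real (K - 1 - (yr - yl)) * (norm x)\<^sup>2 \<le> 1 + R2 * real N"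
    by (simp add: mult.commute)
  with sum_ord_loss_le_update[OF upd lab] show ?thesis
    by (meson mult_right_mono order_trans zero_le_power2)
qed

lemma le_add_twice_if_square_diff_le:
  fixes X V S :: real
  assumes "0 \<le> V" "0 \<le> S" "X\<^sup>2 - 2 * X * S \<le> V\<^sup>2"
  shows "X \<le> V + 2 * S"
proof -
  have "(X - S)\<^sup>2 = (X\<^sup>2 - 2 * X * S) + S\<^sup>2"
    by (simp add: power2_eq_square algebra_simps)
  also have "\<dots> \<le> V\<^sup>2 + 2 * V * S + S\<^sup>2"
    using assms mult_nonneg_nonneg[OF assms(1,2)] by linarith
  also have "\<dots> = (V + S)\<^sup>2"
    by (simp add: power2_eq_square algebra_simps)
  finally have "(X - S)\<^sup>2 \<le> (V + S)\<^sup>2" .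
  then have "X - S \<le> V + S"
    by (rule power2_le_imp_le) (use assms in simp)
  then show ?thesis
    by simp
qed

lemma pa_steps_L2_le:
  fixes x :: "nat \<Rightarrow> 'a::euclidean_space" and u :: 'a and b :: "nat \<Rightarrow> real"
  assumes labels: "\<forall>t\<in>{1..T}. yl t \<le> yr t"
    and run: "\<forall>t\<in>{1..T}. is_PA_update K (x t) (yl t) (yr t) (w t) (\<theta> t) (w (Suc t)) (\<theta> (Suc t))"
  shows "L2_set (\<lambda>t. param_norm K (w (Suc t) - w t) (\<theta> (Suc t) - \<theta> t)) {1..T}
    \<le> param_norm K (w 1 - u) (\<theta> 1 - b)
      + 2 * L2_set (\<lambda>t. L2_set (ord_loss K (x t) (yl t) (yr t) u b) {1..K-1}) {1..T}"
proof -
  define d where "d = (\<lambda>t. param_norm K (w (Suc t) - w t) (\<theta> (Suc t) - \<theta> t))"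
  define s where "s = (\<lambda>t. L2_set (ord_loss K (x t) (yl t) (yr t) u b) {1..K-1})"
  define \<Phi> where "\<Phi> = (\<lambda>t. (param_norm K (w t - u) (\<theta> t - b))\<^sup>2)"
  have "(\<Sum>t=1..T. (d t)\<^sup>2 - 2 * (d t * s t)) \<le> (\<Sum>t=1..T. \<Phi> t - \<Phi> (Suc t))"
  proof (rule sum_mono)
    fix t assume t: "t \<in> {1..T}"
    show "(d t)\<^sup>2 - 2 * (d t * s t) \<le> \<Phi> t - \<Phi> (Suc t)"
      using pa_update_progress[OF run[rule_format, OF t] labels[rule_format, OF t]]
      by (simp add: d_def s_def \<Phi>_def mult.assoc)
  qed
  also have "\<dots> = \<Phi> 1 - \<Phi> (Suc T)"
    using sum_Suc_diff[of 1 T "\<lambda>t. - \<Phi> t"] by simp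
  also have "\<dots> \<le> \<Phi> 1"
    by (simp add: \<Phi>_def)
  finally have "(\<Sum>t=1..T. (d t)\<^sup>2) - 2 * (\<Sum>t=1..T. d t * s t) \<le> \<Phi> 1"
    by (simp only: sum_subtractf sum_distrib_left)
  then have "(L2_set d {1..T})\<^sup>2 - 2 * (\<Sum>t=1..T. d t * s t) \<le> \<Phi> 1"
    by (simp add: L2_set_def sum_nonneg)
  moreover have "(\<Sum>t=1..T. d t * s t) \<le> L2_set d {1..T} * L2_set s {1..T}"
    using L2_set_mult_ineq[of d s] by (simp add: d_def s_def param_norm_nonneg)
  ultimately have "(L2_set d {1..T})\<^sup>2 - 2 * L2_set d {1..T} * L2_set s {1..T}
      \<le> (param_norm K (w 1 - u) (\<theta> 1 - b))\<^sup>2"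
    unfolding \<Phi>_def by linarith
  then have "L2_set d {1..T} \<le> param_norm K (w 1 - u) (\<theta> 1 - b) + 2 * L2_set s {1..T}"
    by (rule le_add_twice_if_square_diff_le[rotated 2]) (simp_all add: param_norm_nonneg)
  then show ?thesis
    unfolding d_def s_def .
qed

lemma pa_cumulative_loss_le:
  fixes x :: "nat \<Rightarrow> 'a::euclidean_space" and u :: 'a and b :: "nat \<Rightarrow> real"
    and N :: nat and R2 :: real
  assumes labels: "\<forall>t\<in>{1..T}. 1 \<le> yl t \<and> yl t \<le> yr t \<and> yr t \<le> K"
    and run: "\<forall>t\<in>{1..T}. is_PA_update K (x t) (yl t) (yr t) (w t) (\<theta> t) (w (Suc t)) (\<theta> (Suc t))"
    and N: "\<forall>t\<in>{1..T}. K - 1 - (yr t - yl t) \<le> N"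
    and R: "\<forall>t\<in>{1..T}. (norm (x t))\<^sup>2 \<le> R2" and "0 \<le> R2"
  shows "(\<Sum>t=1..T. \<Sum>i=1..K-1. (ord_loss K (x t) (yl t) (yr t) (w t) (\<theta> t) i)\<^sup>2)
    \<le> (1 + R2 * real N)\<^sup>2 * (param_norm K (w 1 - u) (\<theta> 1 - b)
        + 4 * real N * L2_set (\<lambda>t. L2_set (ord_loss K (x t) (yl t) (yr t) u b) {1..K-1}) {1..T})\<^sup>2"
proof (cases "N = 0")
  case True
  have "ord_loss K (x t) (yl t) (yr t) (w t) (\<theta> t) i = 0" if t: "t \<in> {1..T}" and "1 \<le> i" for t i
  proof -
    have "1 \<le> yl t" "yl t \<le> yr t" "yr t \<le> K" "K - 1 - (yr t - yl t) = 0"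
      using labels N True t by auto
    then show ?thesis
      using \<open>1 \<le> i\<close> by (intro ord_loss_unconstrained) auto
  qed
  then show ?thesis
    by simp
next
  case False
  define D where "D = 1 + R2 * real N"
  define X where "X = L2_set (\<lambda>t. param_norm K (w (Suc t) - w t) (\<theta> (Suc t) - \<theta> t)) {1..T}"
  define V where "V = param_norm K (w 1 - u) (\<theta> 1 - b)"
  define S where "S = L2_set (\<lambda>t. L2_set (ord_loss K (x t) (yl t) (yr t) u b) {1..K-1}) {1..T}"
  have "1 \<le> D"
    using \<open>0 \<le> R2\<close> by (simp add: D_def)
  have "(\<Sum>t=1..T. \<Sum>i=1..K-1. (ord_loss K (x t) (yl t) (yr t) (w t) (\<theta> t) i)\<^sup>2)
      \<le> (\<Sum>t=1..T. D * (param_norm K (w (Suc t) - w t) (\<theta> (Suc t) - \<theta> t))\<^sup>2)"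
    unfolding D_def using labels run N R \<open>0 \<le> R2\<close>
    by (intro sum_mono sum_ord_loss_le_update_bound) auto
  also have "\<dots> = D * X\<^sup>2"
    by (simp add: X_def L2_set_def sum_distrib_left sum_nonneg)
  also have "\<dots> \<le> D * (V + 2 * S)\<^sup>2"
  proof -
    have "X \<le> V + 2 * S"
      unfolding X_def V_def S_def using labels run by (intro pa_steps_L2_le) auto
    then show ?thesis
      using \<open>1 \<le> D\<close> by (intro mult_left_mono power_mono) (auto simp: X_def)
  qed
  also have "\<dots> \<le> D\<^sup>2 * (V + 4 * real N * S)\<^sup>2"
  proof (intro mult_mono power_mono)
    show "D \<le> D\<^sup>2"
      using \<open>1 \<le> D\<close> by (simp add: power2_eq_square)
    have "2 * S \<le> 4 * real N * S"
      using False by (intro mult_right_mono) (auto simp: S_def)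
    then show "V + 2 * S \<le> V + 4 * real N * S"
      by simp
  qed (auto simp: V_def S_def param_norm_nonneg)
  finally show ?thesis
    by (simp add: D_def V_def S_def)
qed

theorem theorem4:
  fixes x :: "nat \<Rightarrow> 'a::euclidean_space"
    and yl yr :: "nat \<Rightarrow> nat"
    and K T :: nat
    and w :: "nat \<Rightarrow> 'a" and \<theta> :: "nat \<Rightarrow> nat \<Rightarrow> real"
    and u :: 'a and b :: "nat \<Rightarrow> real"
  assumes labels: "\<forall>t\<in>{1..T}. 1 \<le> yl t \<and> yl t \<le> yr t \<and> yr t \<le> K"
    and init_w: "w 1 = 0"
    and init_theta: "\<theta> 1 = (\<lambda>i. 0)"
    and run: "\<forall>t\<in>{1..T}. is_PA_update K (x t) (yl t) (yr t) (w t) (\<theta> t) (w (Suc t)) (\<theta> (Suc t))"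
  shows "(\<Sum>t=1..T. \<Sum>i=1..K-1. (ord_loss K (x t) (yl t) (yr t) (w t) (\<theta> t) i)\<^sup>2)
    \<le> (1 + Max ((\<lambda>t. (norm (x t))\<^sup>2) ` {1..T})
              * (real K - real (Min ((\<lambda>t. yr t - yl t) ` {1..T})) - 1))\<^sup>2
      * (sqrt ((norm u)\<^sup>2 + (\<Sum>i=1..K-1. (b i)\<^sup>2))
         + 4 * (real K - real (Min ((\<lambda>t. yr t - yl t) ` {1..T})) - 1)
             * sqrt (\<Sum>t=1..T. \<Sum>i=1..K-1. (ord_loss K (x t) (yl t) (yr t) u b i)\<^sup>2))\<^sup>2"
proof (cases "T = 0")
  case True
  then show ?thesis
    by simp
next
  case False
  define c where "c = Min ((\<lambda>t. yr t - yl t) ` {1..T})"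
  define R2 where "R2 = Max ((\<lambda>t. (norm (x t))\<^sup>2) ` {1..T})"
  have c: "c \<le> yr t - yl t" and R2: "(norm (x t))\<^sup>2 \<le> R2" if "t \<in> {1..T}" for t
    unfolding c_def R2_def using that by (auto intro: Min_le Max_ge)
  have "1 \<in> {1..T}"
    using False by simp
  then have "0 \<le> R2"
    using R2 by (auto intro: order_trans[OF zero_le_power2])
  have "c + 1 \<le> K"
    using c[OF \<open>1 \<in> {1..T}\<close>] labels[rule_format, OF \<open>1 \<in> {1..T}\<close>] by linarith
  then have N: "real K - real c - 1 = real (K - 1 - c)"
    by (simp add: of_nat_diff)
  have "(\<Sum>t=1..T. \<Sum>i=1..K-1. (ord_loss K (x t) (yl t) (yr t) (w t) (\<theta> t) i)\<^sup>2)
    \<le> (1 + R2 * real (K - 1 - c))\<^sup>2 * (param_norm K (w 1 - u) (\<theta> 1 - b)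
        + 4 * real (K - 1 - c) * L2_set (\<lambda>t. L2_set (ord_loss K (x t) (yl t) (yr t) u b) {1..K-1}) {1..T})\<^sup>2"
  proof (rule pa_cumulative_loss_le)
    show "\<forall>t\<in>{1..T}. K - 1 - (yr t - yl t) \<le> K - 1 - c"
      using c by (simp add: diff_le_mono2)
  qed (use labels run R2 \<open>0 \<le> R2\<close> in auto)
  moreover have "param_norm K (w 1 - u) (\<theta> 1 - b) = sqrt ((norm u)\<^sup>2 + (\<Sum>i=1..K-1. (b i)\<^sup>2))"
    using init_w init_theta by (simp add: param_norm_eq)
  moreover have "L2_set (\<lambda>t. L2_set (ord_loss K (x t) (yl t) (yr t) u b) {1..K-1}) {1..T}
      = sqrt (\<Sum>t=1..T. \<Sum>i=1..K-1. (ord_loss K (x t) (yl t) (yr t) u b i)\<^sup>2)"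
    by (simp add: L2_set_def sum_nonneg)
  ultimately show ?thesis
    unfolding c_def[symmetric] R2_def[symmetric] N by simp
qed

end
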